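(* Let $\ell\ge5$, let $G$ be an $\ell$-holed graph, and let $(A,B,P_1,\dots,P_4)$ be a $4$-bar gate in $G$, where $P_i$ has ends $a_i\in V(A)$, $b_i\in V(B)$. Define $d(1,2,3,4)=d_A(a_1,a_2)+d_A(a_3,a_4)$, $d(1,3,2,4)=d_A(a_1,a_3)+d_A(a_2,a_4)$ and $d(1,4,2,3)=d_A(a_1,a_4)+d_A(a_2,a_3)$. Then two of $d(1,2,3,4),d(1,3,2,4),d(1,4,2,3)$ are equal and the third is at most one more.
   Context: A hole is an induced cycle of length at least four; $G$ is $\ell$-holed if all holes have length exactly $\ell$. $d_A$ denotes distance in $A$. A $4$-bar semigate in $G$ is a tuple $(A,B,P_1,\dots,P_4)$ of induced subgraphs such that: $A,B$ are vertex-disjoint connected subgraphs; each $P_i$ is a path with ends $a_i,b_i$, $V(P_i\cap A)=\{a_i\}$, $V(P_i\cap B)=\{b_i\}$; the $P_i$ are distinct and $V(P_i\cap P_j)=\{a_i,b_i\}\cap\{a_j,b_j\}$ for $i<j$; each vertex of $A$ has at most one neighbour in $V(B)$ and vice versa; and $A\cup B\cup P_1\cup\dots\cup P_4$ is induced. A semigate $(A',B',P'_1,\dots,P'_4)$ is strictly better than $(A,B,P_1,\dots,P_4)$ if $A'\subseteq A$, $B'\subseteq B$, $P_i\subseteq P'_i$ for all $i$, and $A'\ne A$ or $B'\ne B$. A $4$-bar gate is a $4$-bar semigate with no strictly better $4$-bar semigate. *)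

theory Defs
  imports Main
begin

text \<open>A finite simple graph: vertex set V, symmetric irreflexive adjacency E on V.
  Induced subgraphs are represented by their vertex sets.\<close>

definition graph :: "'a set \<Rightarrow> ('a \<Rightarrow> 'a \<Rightarrow> bool) \<Rightarrow> bool" where
  "graph V E \<longleftrightarrow> finite V \<and> (\<forall>x y. E x y \<longrightarrow> E y x) \<and> (\<forall>x. \<not> E x x)
     \<and> (\<forall>x y. E x y \<longrightarrow> x \<in> V \<and> y \<in> V)"

definition is_hole :: "'a set \<Rightarrow> ('a \<Rightarrow> 'a \<Rightarrow> bool) \<Rightarrow> 'a list \<Rightarrow> bool" where
  "is_hole V E cs \<longleftrightarrow> distinct cs \<and> length cs \<ge> 4 \<and> set cs \<subseteq> V \<and>
     (\<forall>i < length cs. \<forall>j < length cs.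
        E (cs ! i) (cs ! j) \<longleftrightarrow> (j = Suc i mod length cs \<or> i = Suc j mod length cs))"

definition holed :: "nat \<Rightarrow> 'a set \<Rightarrow> ('a \<Rightarrow> 'a \<Rightarrow> bool) \<Rightarrow> bool" where
  "holed l V E \<longleftrightarrow> (\<forall>cs. is_hole V E cs \<longrightarrow> length cs = l)"

definition connected_set :: "('a \<Rightarrow> 'a \<Rightarrow> bool) \<Rightarrow> 'a set \<Rightarrow> bool" where
  "connected_set E X \<longleftrightarrow> X \<noteq> {} \<and>
     (\<forall>u\<in>X. \<forall>v\<in>X. (\<lambda>x y. E x y \<and> x \<in> X \<and> y \<in> X)\<^sup>*\<^sup>* u v)"

definition is_path_ends :: "('a \<Rightarrow> 'a \<Rightarrow> bool) \<Rightarrow> 'a set \<Rightarrow> 'a \<Rightarrow> 'a \<Rightarrow> bool" where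
  "is_path_ends E P a b \<longleftrightarrow> (\<exists>xs. xs \<noteq> [] \<and> distinct xs \<and> set xs = P \<and>
     hd xs = a \<and> last xs = b \<and>
     (\<forall>i < length xs. \<forall>j < length xs. E (xs ! i) (xs ! j) \<longleftrightarrow> (j = Suc i \<or> i = Suc j)))"

definition walk_in :: "('a \<Rightarrow> 'a \<Rightarrow> bool) \<Rightarrow> 'a set \<Rightarrow> 'a \<Rightarrow> 'a \<Rightarrow> nat \<Rightarrow> bool" where
  "walk_in E X u v n \<longleftrightarrow> (\<exists>xs. length xs = Suc n \<and> set xs \<subseteq> X \<and> hd xs = u \<and> last xs = v \<and>
     (\<forall>i < n. E (xs ! i) (xs ! Suc i)))"

definition dist_in :: "('a \<Rightarrow> 'a \<Rightarrow> bool) \<Rightarrow> 'a set \<Rightarrow> 'a \<Rightarrow> 'a \<Rightarrow> nat" where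
  "dist_in E X u v = (LEAST n. walk_in E X u v n)"

definition semigate4 :: "'a set \<Rightarrow> ('a \<Rightarrow> 'a \<Rightarrow> bool) \<Rightarrow> 'a set \<Rightarrow> 'a set \<Rightarrow> (nat \<Rightarrow> 'a set) \<Rightarrow> bool" where
  "semigate4 V E A B P \<longleftrightarrow>
     A \<subseteq> V \<and> B \<subseteq> V \<and> (\<forall>i\<in>{1..4}. P i \<subseteq> V) \<and>
     A \<inter> B = {} \<and> connected_set E A \<and> connected_set E B \<and>
     (\<exists>a b. (\<forall>i\<in>{1..4}. is_path_ends E (P i) (a i) (b i) \<and>
                         P i \<inter> A = {a i} \<and> P i \<inter> B = {b i}) \<and>
            (\<forall>i\<in>{1..4}. \<forall>j\<in>{1..4}. i < j \<longrightarrow>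
                P i \<noteq> P j \<and> P i \<inter> P j = {a i, b i} \<inter> {a j, b j})) \<and>
     (\<forall>x\<in>A. \<forall>y\<in>B. \<forall>y'\<in>B. E x y \<and> E x y' \<longrightarrow> y = y') \<and>
     (\<forall>y\<in>B. \<forall>x\<in>A. \<forall>x'\<in>A. E y x \<and> E y x' \<longrightarrow> x = x') \<and>
     (\<forall>u v. E u v \<and> u \<in> A \<union> B \<union> (\<Union>i\<in>{1..4}. P i) \<and> v \<in> A \<union> B \<union> (\<Union>i\<in>{1..4}. P i)
        \<longrightarrow> (u \<in> A \<and> v \<in> A) \<or> (u \<in> B \<and> v \<in> B) \<or> (\<exists>i\<in>{1..4}. u \<in> P i \<and> v \<in> P i))"

definition strictly_better4 :: "'a set \<Rightarrow> 'a set \<Rightarrow> (nat \<Rightarrow> 'a set) \<Rightarrow> 'a set \<Rightarrow> 'a set \<Rightarrow> (nat \<Rightarrow> 'a set) \<Rightarrow> bool" where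
  "strictly_better4 A' B' P' A B P \<longleftrightarrow>
     A' \<subseteq> A \<and> B' \<subseteq> B \<and> (\<forall>i\<in>{1..4}. P i \<subseteq> P' i) \<and> (A' \<noteq> A \<or> B' \<noteq> B)"

definition gate4 :: "'a set \<Rightarrow> ('a \<Rightarrow> 'a \<Rightarrow> bool) \<Rightarrow> 'a set \<Rightarrow> 'a set \<Rightarrow> (nat \<Rightarrow> 'a set) \<Rightarrow> bool" where
  "gate4 V E A B P \<longleftrightarrow> semigate4 V E A B P \<and>
     \<not> (\<exists>A' B' P'. semigate4 V E A' B' P' \<and> strictly_better4 A' B' P' A B P)"

end

theory Submission
  imports Defs
begin

text \<open>Choose geodesics Q from a1 to a2 and R from a3 to a4 in A, where d(1,2,3,4) = m + n is
  the smallest of the three sums. By minimality of the gate, A is a minimal connected set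
  containing a1, ..., a4. If Q and R meet, all three sums equal m + n. If Q and R are neither
  intersecting nor adjacent, all paths from Q to R pass through one vertex c, so
  d(1,3,2,4) = d(1,4,2,3). Otherwise A is the ladder formed by Q and R with the edges between
  them as rungs (i, j); then d(1,3,2,4) and d(1,4,2,3) are m + n + 2 minus the spread of i + j,
  resp. of i - j, over the rungs. As G has no hole of length four, every square of rungs has
  a diagonal, which forces both spreads to vanish as soon as one of them does.\<close>

definition walk_list :: "('a \<Rightarrow> 'a \<Rightarrow> bool) \<Rightarrow> 'a set \<Rightarrow> 'a \<Rightarrow> 'a \<Rightarrow> nat \<Rightarrow> 'a list \<Rightarrow> bool" where
  "walk_list E X u v n xs \<longleftrightarrow>
     length xs = Suc n \<and> set xs \<subseteq> X \<and> hd xs = u \<and> last xs = v \<and> successively E xs"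

lemma walk_in_iff_walk_list: "walk_in E X u v n \<longleftrightarrow> (\<exists>xs. walk_list E X u v n xs)"
  unfolding walk_in_def walk_list_def successively_conv_nth by auto

lemma walk_list_nth:
  assumes "walk_list E X u v n xs"
  shows "xs ! 0 = u" "xs ! n = v" "k \<le> n \<Longrightarrow> xs ! k \<in> X" "k < n \<Longrightarrow> E (xs ! k) (xs ! Suc k)"
proof -
  have "xs \<noteq> []" "length xs = Suc n" using assms unfolding walk_list_def by auto
  then show "xs ! 0 = u" "xs ! n = v" "k \<le> n \<Longrightarrow> xs ! k \<in> X" "k < n \<Longrightarrow> E (xs ! k) (xs ! Suc k)"
    using assms unfolding walk_list_def successively_conv_nth
    by (auto simp: hd_conv_nth last_conv_nth)
qed

lemma set_walk_list: "walk_list E X u v n xs \<Longrightarrow> set xs = (\<lambda>k. xs ! k) ` {..n}"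
  unfolding walk_list_def by (auto simp: set_conv_nth image_def less_Suc_eq_le)

lemma walk_in_refl: "u \<in> X \<Longrightarrow> walk_in E X u u 0"
  unfolding walk_in_iff_walk_list walk_list_def by (rule exI[of _ "[u]"]) auto

lemma walk_in_edge: "E u v \<Longrightarrow> u \<in> X \<Longrightarrow> v \<in> X \<Longrightarrow> walk_in E X u v 1"
  unfolding walk_in_iff_walk_list walk_list_def by (rule exI[of _ "[u, v]"]) auto

lemma walk_in_mono: "walk_in E X u v n \<Longrightarrow> X \<subseteq> Y \<Longrightarrow> walk_in E Y u v n"
  unfolding walk_in_def by blast

lemma walk_in_trans:
  assumes "walk_in E X u v n" "walk_in E X v w k"
  shows "walk_in E X u w (n + k)"
proof -
  obtain xs where xs: "walk_list E X u v n xs" using assms(1) walk_in_iff_walk_list by metis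
  obtain ys where ys: "walk_list E X v w k ys" using assms(2) walk_in_iff_walk_list by metis
  then obtain ys' where ys': "ys = v # ys'" unfolding walk_list_def by (cases ys) auto
  have "successively E (xs @ ys')"
    using xs ys ys' unfolding walk_list_def
    by (cases ys') (auto simp: successively_append_iff)
  then have "walk_list E X u w (n + k) (xs @ ys')"
    using xs ys ys' unfolding walk_list_def by (cases xs; cases ys') auto
  then show ?thesis using walk_in_iff_walk_list by metis
qed

lemma walk_in_sym:
  assumes "symp E" "walk_in E X u v n"
  shows "walk_in E X v u n"
proof -
  obtain xs where xs: "walk_list E X u v n xs" using assms(2) walk_in_iff_walk_list by metis
  have "successively E (rev xs)"
    using xs assms(1) unfolding walk_list_def
    by (auto simp: successively_rev intro: successively_mono dest: sympD)
  then have "walk_list E X v u n (rev xs)"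
    using xs unfolding walk_list_def by (simp add: hd_rev last_rev)
  then show ?thesis using walk_in_iff_walk_list by metis
qed

lemma walk_list_split:
  assumes "walk_list E X u v n xs" "k \<le> n"
  shows "walk_in E X u (xs ! k) k" "walk_in E X (xs ! k) v (n - k)"
proof -
  have len: "length xs = Suc n" using assms(1) unfolding walk_list_def by simp
  then have "last (take (Suc k) xs) = xs ! k"
    using assms(2) by (subst last_conv_nth) auto
  then have "walk_list E X u (xs ! k) k (take (Suc k) xs)"
    using assms len unfolding walk_list_def
    by (auto simp: successively_conv_nth min_def dest: in_set_takeD)
  then show "walk_in E X u (xs ! k) k" using walk_in_iff_walk_list by metis
  have "walk_list E X (xs ! k) v (n - k) (drop k xs)"
    using assms unfolding walk_list_def
    by (auto simp: hd_drop_conv_nth successively_conv_nth dest: in_set_dropD)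
  then show "walk_in E X (xs ! k) v (n - k)" using walk_in_iff_walk_list by metis
qed

lemma rtranclp_imp_walk_in:
  assumes "(\<lambda>x y. E x y \<and> x \<in> X \<and> y \<in> X)\<^sup>*\<^sup>* u v" "u \<in> X"
  shows "\<exists>n. walk_in E X u v n"
  using assms
proof (induction rule: rtranclp_induct)
  case base
  then show ?case using walk_in_refl by metis
next
  case (step y z)
  then obtain n where "walk_in E X u y n" by blast
  moreover have "walk_in E X y z 1" using step.hyps(2) walk_in_edge[of E y z X] by blast
  ultimately have "walk_in E X u z (n + 1)" by (rule walk_in_trans)
  then show ?case ..
qed

lemma walk_in_imp_rtranclp:
  assumes "walk_in E X u v n"
  shows "(\<lambda>x y. E x y \<and> x \<in> X \<and> y \<in> X)\<^sup>*\<^sup>* u v"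
  using assms
proof (induction n arbitrary: v)
  case 0
  then show ?case unfolding walk_in_def by (auto simp: length_Suc_conv)
next
  case (Suc n)
  then obtain xs where xs: "walk_list E X u v (Suc n) xs" using walk_in_iff_walk_list by metis
  have "walk_in E X u (xs ! n) n" using walk_list_split(1)[OF xs] by simp
  moreover have "E (xs ! n) v" "xs ! n \<in> X" "v \<in> X" using walk_list_nth[OF xs] by auto
  ultimately show ?case using Suc.IH[of "xs ! n"] by (simp add: rtranclp.rtrancl_into_rtrancl)
qed

lemma connected_set_iff_walk_in:
  "connected_set E X \<longleftrightarrow> X \<noteq> {} \<and> (\<forall>u\<in>X. \<forall>v\<in>X. \<exists>n. walk_in E X u v n)"
  unfolding connected_set_def
  using rtranclp_imp_walk_in[of E X] walk_in_imp_rtranclp[of E X] by blast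

lemma connected_set_walk_in:
  "connected_set E X \<Longrightarrow> u \<in> X \<Longrightarrow> v \<in> X \<Longrightarrow> \<exists>n. walk_in E X u v n"
  unfolding connected_set_iff_walk_in by blast

lemma connected_set_if_walks_to:
  assumes sym: "symp E" and c: "c \<in> X" and to_c: "\<And>w. w \<in> X \<Longrightarrow> \<exists>n. walk_in E X w c n"
  shows "connected_set E X"
  unfolding connected_set_iff_walk_in
proof (intro conjI ballI)
  show "X \<noteq> {}" using c by blast
  fix u v assume "u \<in> X" "v \<in> X"
  then obtain i j where uc: "walk_in E X u c i" and vc: "walk_in E X v c j" using to_c by blast
  from uc walk_in_sym[OF sym vc] have "walk_in E X u v (i + j)" by (rule walk_in_trans)
  then show "\<exists>n. walk_in E X u v n" ..
qed

lemma connected_set_walk_list: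
  assumes sym: "symp E" and xs: "walk_list E X u v n xs"
  shows "connected_set E (set xs)"
proof (rule connected_set_if_walks_to[OF sym])
  have xs': "walk_list E (set xs) u v n xs" using xs unfolding walk_list_def by simp
  show "u \<in> set xs" using xs unfolding walk_list_def by (auto intro: hd_in_set)
  fix x assume "x \<in> set xs"
  then obtain k where "k \<le> n" "x = xs ! k" using set_walk_list[OF xs] by auto
  then have "walk_in E (set xs) u x k" using walk_list_split(1)[OF xs'] by simp
  then show "\<exists>k. walk_in E (set xs) x u k" using walk_in_sym[OF sym] by blast
qed

lemma connected_set_Un:
  assumes sym: "symp E" and X: "connected_set E X" and Y: "connected_set E Y"
    and link: "\<exists>x\<in>X. \<exists>y\<in>Y. x = y \<or> E x y"
  shows "connected_set E (X \<union> Y)"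
proof -
  obtain x y where x: "x \<in> X" and y: "y \<in> Y" and "x = y \<or> E x y"
    using link by blast
  then obtain k where yx: "walk_in E (X \<union> Y) y x k"
  proof (elim disjE)
    assume "x = y"
    then show ?thesis using that walk_in_refl[of y "X \<union> Y"] y by blast
  next
    assume "E x y"
    with sym have "E y x" by (rule sympD)
    then show ?thesis using that x y by (blast intro: walk_in_edge)
  qed
  show ?thesis
  proof (rule connected_set_if_walks_to[OF sym])
    show "x \<in> X \<union> Y" using x by blast
    fix u assume u: "u \<in> X \<union> Y"
    show "\<exists>n. walk_in E (X \<union> Y) u x n"
    proof (cases "u \<in> X")
      case True
      then obtain j where "walk_in E X u x j" using connected_set_walk_in[OF X _ x] by blast
      then have "walk_in E (X \<union> Y) u x j" by (rule walk_in_mono) blast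
      then show ?thesis ..
    next
      case False
      then obtain j where "walk_in E Y u y j" using u connected_set_walk_in[OF Y _ y] by blast
      then have "walk_in E (X \<union> Y) u y j" by (rule walk_in_mono) blast
      then have "walk_in E (X \<union> Y) u x (j + k)" using yx by (rule walk_in_trans)
      then show ?thesis ..
    qed
  qed
qed

locale connected_subgraph =
  fixes E :: "'a \<Rightarrow> 'a \<Rightarrow> bool" and A :: "'a set"
  assumes symmetric: "symp E" and connected: "connected_set E A"
begin

abbreviation dA :: "'a \<Rightarrow> 'a \<Rightarrow> nat" where
  "dA \<equiv> dist_in E A"

lemma walk_in_dist:
  assumes "u \<in> A" "v \<in> A"
  shows "walk_in E A u v (dA u v)"
  unfolding dist_in_def using connected_set_walk_in[OF connected assms] by (rule LeastI_ex)

lemma dist_le_walk: "walk_in E A u v n \<Longrightarrow> dA u v \<le> n"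
  unfolding dist_in_def by (rule Least_le)

lemma dist_commute: "dA u v = dA v u"
proof -
  have "walk_in E A u v = walk_in E A v u" using walk_in_sym[OF symmetric] by blast
  then show ?thesis unfolding dist_in_def by simp
qed

lemma dist_triangle: "u \<in> A \<Longrightarrow> v \<in> A \<Longrightarrow> w \<in> A \<Longrightarrow> dA u w \<le> dA u v + dA v w"
  using walk_in_dist walk_in_trans dist_le_walk by metis

lemma dist_edge: "E u v \<Longrightarrow> u \<in> A \<Longrightarrow> v \<in> A \<Longrightarrow> dA u v \<le> 1"
  using walk_in_edge dist_le_walk by metis

definition geodesic :: "'a \<Rightarrow> 'a \<Rightarrow> 'a list \<Rightarrow> bool" where
  "geodesic u v xs \<longleftrightarrow> walk_list E A u v (dA u v) xs"

lemma geodesic_exists: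
  assumes "u \<in> A" "v \<in> A"
  obtains xs where "geodesic u v xs"
  using walk_in_dist[OF assms] unfolding geodesic_def walk_in_iff_walk_list by blast

lemma geodesic_set:
  assumes "geodesic u v xs"
  shows "set xs = (\<lambda>k. xs ! k) ` {..dA u v}" "set xs \<subseteq> A" "u \<in> set xs" "v \<in> set xs"
proof -
  have w: "walk_list E A u v (dA u v) xs" using assms unfolding geodesic_def .
  show "set xs = (\<lambda>k. xs ! k) ` {..dA u v}" using set_walk_list[OF w] .
  then show "u \<in> set xs" "v \<in> set xs"
    using walk_list_nth(1,2)[OF w] by (metis atMost_iff image_eqI le0 order_refl)+
  show "set xs \<subseteq> A" using w unfolding walk_list_def by simp
qed

lemma geodesic_nth_ends: "geodesic u v xs \<Longrightarrow> xs ! 0 = u" "geodesic u v xs \<Longrightarrow> xs ! dA u v = v"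
  unfolding geodesic_def using walk_list_nth(1,2) by metis+

lemma geodesic_nth_dist:
  assumes g: "geodesic u v xs" and k: "k \<le> dA u v"
  shows "dA u (xs ! k) = k" "dA (xs ! k) v = dA u v - k"
proof -
  have w: "walk_list E A u v (dA u v) xs" using g unfolding geodesic_def .
  have le: "dA u (xs ! k) \<le> k" "dA (xs ! k) v \<le> dA u v - k"
    using walk_list_split[OF w k] dist_le_walk by auto
  have "u \<in> A" "xs ! k \<in> A" "v \<in> A" using walk_list_nth[OF w] k by (metis le0 order_refl)+
  then have "dA u v \<le> dA u (xs ! k) + dA (xs ! k) v" by (rule dist_triangle)
  then show "dA u (xs ! k) = k" "dA (xs ! k) v = dA u v - k" using le k by auto
qed

lemma geodesic_nth_dist_ends:
  assumes "geodesic u v xs" "k \<le> dA u v"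
  shows "dA u (xs ! k) = k" "dA v (xs ! k) = dA u v - k"
  using geodesic_nth_dist[OF assms] dist_commute by simp_all

lemma geodesic_nth_inj:
  "geodesic u v xs \<Longrightarrow> i \<le> dA u v \<Longrightarrow> j \<le> dA u v \<Longrightarrow> xs ! i = xs ! j \<Longrightarrow> i = j"
  using geodesic_nth_dist(1) by metis

lemma geodesic_adjacent: "geodesic u v xs \<Longrightarrow> k < dA u v \<Longrightarrow> E (xs ! k) (xs ! Suc k)"
  unfolding geodesic_def using walk_list_nth(4) by metis

lemma geodesic_mem:
  assumes g: "geodesic u v xs" and x: "x \<in> set xs"
  shows "xs ! dA u x = x" "dA u x \<le> dA u v" "dA x v = dA u v - dA u x"
proof -
  obtain k where "k \<le> dA u v" "x = xs ! k" using geodesic_set(1)[OF g] x by auto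
  then show "xs ! dA u x = x" "dA u x \<le> dA u v" "dA x v = dA u v - dA u x"
    using geodesic_nth_dist[OF g] by auto
qed

lemma geodesic_dist_split: "geodesic u v xs \<Longrightarrow> x \<in> set xs \<Longrightarrow> dA u x + dA x v = dA u v"
  using geodesic_mem(2,3) by fastforce

lemma connected_set_geodesic: "geodesic u v xs \<Longrightarrow> connected_set E (set xs)"
  unfolding geodesic_def by (rule connected_set_walk_list[OF symmetric])

lemma dist_leaving:
  assumes u: "u \<in> X" "u \<in> A" and v: "v \<in> A" "v \<notin> X"
  obtains x y where "x \<in> X" "x \<in> A" "y \<in> A" "y \<notin> X" "E x y" "dA u v = dA u x + 1 + dA y v"
proof -
  obtain xs where g: "geodesic u v xs" using geodesic_exists u v by metis
  have w: "walk_list E A u v (dA u v) xs" using g unfolding geodesic_def .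
  define k where "k = (LEAST k. xs ! k \<notin> X)"
  have kX: "xs ! k \<notin> X" unfolding k_def using walk_list_nth(2)[OF w] v by (metis LeastI)
  have kle: "k \<le> dA u v" unfolding k_def using walk_list_nth(2)[OF w] v by (metis Least_le)
  have k0: "k \<noteq> 0" using kX walk_list_nth(1)[OF w] u by (metis gr0I)
  have km: "xs ! (k - 1) \<in> X"
    using not_less_Least[of "k - 1" "\<lambda>k. xs ! k \<notin> X"] k0 unfolding k_def by simp
  show ?thesis
  proof (rule that)
    show "xs ! (k - 1) \<in> X" "xs ! k \<notin> X" by fact+
    show "xs ! (k - 1) \<in> A" "xs ! k \<in> A" using walk_list_nth(3)[OF w] kle by auto
    show "E (xs ! (k - 1)) (xs ! k)" using geodesic_adjacent[OF g, of "k - 1"] k0 kle by simp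
    show "dA u v = dA u (xs ! (k - 1)) + 1 + dA (xs ! k) v"
      using geodesic_nth_dist[OF g, of "k - 1"] geodesic_nth_dist[OF g kle] k0 kle by simp
  qed
qed

lemma dist_through_cut_vertex:
  assumes cut: "\<And>x y. x \<in> X \<Longrightarrow> y \<in> A \<Longrightarrow> y \<notin> X \<Longrightarrow> E x y \<Longrightarrow> y = c"
    and c: "c \<in> A" and u: "u \<in> X" "u \<in> A" and v: "v \<in> A" "v \<notin> X"
  shows "dA u v = dA u c + dA c v"
proof -
  obtain x y where xy: "x \<in> X" "x \<in> A" "y \<in> A" "y \<notin> X" "E x y"
    and split: "dA u v = dA u x + 1 + dA y v"
    using dist_leaving[OF u v] .
  have "y = c" using cut xy by blast
  then have "dA u c \<le> dA u x + 1" using dist_triangle[OF u(2) xy(2) c] dist_edge xy by fastforce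
  moreover have "dA u v = dA u x + 1 + dA c v" using split \<open>y = c\<close> by simp
  ultimately show ?thesis using dist_triangle[OF u(2) c v(1)] by linarith
qed

definition dist_to_set :: "'a set \<Rightarrow> 'a \<Rightarrow> nat" where
  "dist_to_set C w = Min (dA w ` C)"

lemma dist_to_set_le: "finite C \<Longrightarrow> c \<in> C \<Longrightarrow> dist_to_set C w \<le> dA w c"
  unfolding dist_to_set_def by simp

lemma dist_to_set_attained:
  assumes "finite C" "C \<noteq> {}"
  obtains c where "c \<in> C" "dist_to_set C w = dA w c"
proof -
  have "Min (dA w ` C) \<in> dA w ` C" using assms by simp
  then show ?thesis using that unfolding dist_to_set_def by blast
qed

lemma dist_to_set_decreasing:
  assumes "finite C" and c: "c \<in> C" "dist_to_set C w = dA w c"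
    and g: "geodesic w c xs" and x: "x \<in> set xs" "x \<noteq> w"
  shows "dist_to_set C x < dist_to_set C w"
proof -
  have "dA w x \<noteq> 0" using geodesic_mem(1)[OF g x(1)] geodesic_nth_ends(1)[OF g] x(2) by metis
  moreover have "dA x c = dA w c - dA w x" "dA w x \<le> dA w c" using geodesic_mem(2,3)[OF g x(1)] by simp_all
  moreover have "dist_to_set C x \<le> dA x c" using dist_to_set_le assms(1) c(1) .
  ultimately show ?thesis using c(2) by linarith
qed

text \<open>A geodesic from any other vertex to a nearest point of C gets strictly closer to C, so it
  avoids the vertex farthest from C.\<close>
lemma connected_set_delete_farthest:
  assumes fin: "finite A" and CA: "C \<subseteq> A" and C: "connected_set E C" and neq: "C \<noteq> A"
  obtains v where "v \<in> A - C" "connected_set E (A - {v})"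
proof -
  let ?g = "dist_to_set C"
  have finC: "finite C" and neC: "C \<noteq> {}"
    using fin CA C finite_subset unfolding connected_set_def by auto
  have "finite (?g ` (A - C))" "?g ` (A - C) \<noteq> {}" using fin neq CA by auto
  then have "Max (?g ` (A - C)) \<in> ?g ` (A - C)" by (rule Max_in)
  then obtain v where v: "v \<in> A - C" and v_Max: "?g v = Max (?g ` (A - C))"
    by (metis imageE)
  have v_max: "?g w \<le> ?g v" if "w \<in> A - C" for w
    unfolding v_Max using \<open>finite (?g ` (A - C))\<close> that by simp
  obtain c0 where c0: "c0 \<in> C" using neC by blast
  have in_C: "\<exists>n. walk_in E (A - {v}) w c0 n" if w: "w \<in> C" for w
  proof -
    obtain n where "walk_in E C w c0 n" using connected_set_walk_in[OF C w c0] by blast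
    then have "walk_in E (A - {v}) w c0 n" by (rule walk_in_mono) (use CA v in blast)
    then show ?thesis ..
  qed
  have "connected_set E (A - {v})"
  proof (rule connected_set_if_walks_to[OF symmetric])
    show "c0 \<in> A - {v}" using c0 CA v by blast
    fix w assume w: "w \<in> A - {v}"
    show "\<exists>n. walk_in E (A - {v}) w c0 n"
    proof (cases "w \<in> C")
      case False
      obtain c where c: "c \<in> C" "?g w = dA w c" using dist_to_set_attained[OF finC neC] by blast
      obtain xs where g: "geodesic w c xs" using geodesic_exists w c CA by blast
      have "v \<notin> set xs"
        using dist_to_set_decreasing[OF finC c g, of v] v_max[of w] w False by fastforce
      then have "walk_in E (A - {v}) w c (dA w c)"
        using g unfolding geodesic_def walk_in_iff_walk_list walk_list_def by blast
      moreover obtain n where "walk_in E (A - {v}) c c0 n" using in_C[OF c(1)] by blast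
      ultimately have "walk_in E (A - {v}) w c0 (dA w c + n)" by (rule walk_in_trans)
      then show ?thesis ..
    qed (use in_C in blast)
  qed
  then show ?thesis using that v by blast
qed

end

lemma semigate4_delete:
  assumes semi: "semigate4 V E A B P" and v: "\<And>i. i \<in> {1..4} \<Longrightarrow> v \<notin> P i"
    and conn: "connected_set E (A - {v})"
  shows "semigate4 V E (A - {v}) B P"
proof -
  let ?U = "\<lambda>A. A \<union> B \<union> (\<Union>i\<in>{1..4}. P i)"
  have parts: "A \<subseteq> V" "B \<subseteq> V" "\<forall>i\<in>{1..4}. P i \<subseteq> V" "connected_set E B"
      "\<forall>x\<in>A. \<forall>y\<in>B. \<forall>y'\<in>B. E x y \<and> E x y' \<longrightarrow> y = y'"
      "\<forall>y\<in>B. \<forall>x\<in>A. \<forall>x'\<in>A. E y x \<and> E y x' \<longrightarrow> x = x'"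
    and AB: "A \<inter> B = {}"
    and induced: "\<forall>u w. E u w \<and> u \<in> ?U A \<and> w \<in> ?U A
        \<longrightarrow> (u \<in> A \<and> w \<in> A) \<or> (u \<in> B \<and> w \<in> B) \<or> (\<exists>i\<in>{1..4}. u \<in> P i \<and> w \<in> P i)"
    using semi unfolding semigate4_def by - (elim conjE, assumption)+
  have "\<forall>u w. E u w \<and> u \<in> ?U (A - {v}) \<and> w \<in> ?U (A - {v})
      \<longrightarrow> (u \<in> A - {v} \<and> w \<in> A - {v}) \<or> (u \<in> B \<and> w \<in> B) \<or> (\<exists>i\<in>{1..4}. u \<in> P i \<and> w \<in> P i)"
  proof (intro allI impI)
    fix u w assume uw: "E u w \<and> u \<in> ?U (A - {v}) \<and> w \<in> ?U (A - {v})"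
    have "(u \<in> A \<and> w \<in> A) \<or> (u \<in> B \<and> w \<in> B) \<or> (\<exists>i\<in>{1..4}. u \<in> P i \<and> w \<in> P i)"
      using induced uw by blast
    moreover have "u \<in> A \<Longrightarrow> u \<noteq> v" "w \<in> A \<Longrightarrow> w \<noteq> v" using uw AB v by blast+
    ultimately show "(u \<in> A - {v} \<and> w \<in> A - {v}) \<or> (u \<in> B \<and> w \<in> B) \<or> (\<exists>i\<in>{1..4}. u \<in> P i \<and> w \<in> P i)"
      by blast
  qed
  moreover have "\<exists>a b. (\<forall>i\<in>{1..4}. is_path_ends E (P i) (a i) (b i) \<and>
                         P i \<inter> (A - {v}) = {a i} \<and> P i \<inter> B = {b i}) \<and>
            (\<forall>i\<in>{1..4}. \<forall>j\<in>{1..4}. i < j \<longrightarrow>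
                P i \<noteq> P j \<and> P i \<inter> P j = {a i, b i} \<inter> {a j, b j})"
  proof -
    obtain a b where "\<forall>i\<in>{1..4}. is_path_ends E (P i) (a i) (b i) \<and>
                         P i \<inter> A = {a i} \<and> P i \<inter> B = {b i}"
        "\<forall>i\<in>{1..4}. \<forall>j\<in>{1..4}. i < j \<longrightarrow>
                P i \<noteq> P j \<and> P i \<inter> P j = {a i, b i} \<inter> {a j, b j}"
      using semi unfolding semigate4_def by (elim conjE exE) blast
    moreover have "P i \<inter> (A - {v}) = P i \<inter> A" if "i \<in> {1..4}" for i using v[OF that] by blast
    ultimately show ?thesis by auto
  qed
  moreover have "A - {v} \<subseteq> V" "(A - {v}) \<inter> B = {}" using parts(1) AB by blast+
  moreover have "\<forall>x\<in>A - {v}. \<forall>y\<in>B. \<forall>y'\<in>B. E x y \<and> E x y' \<longrightarrow> y = y'"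
      "\<forall>y\<in>B. \<forall>x\<in>A - {v}. \<forall>x'\<in>A - {v}. E y x \<and> E y x' \<longrightarrow> x = x'"
    using parts(5,6) by blast+
  ultimately show ?thesis
    using parts(2-4) conn unfolding semigate4_def by (intro conjI) assumption+
qed

lemma gate4_connected_subset_eq:
  assumes graph: "graph V E" and gate: "gate4 V E A B P"
    and ends: "\<forall>i\<in>{1..4}. P i \<inter> A = {a i}"
    and CA: "C \<subseteq> A" and C: "connected_set E C" and aC: "\<forall>i\<in>{1..4}. a i \<in> C"
  shows "C = A"
proof (rule ccontr)
  assume neq: "C \<noteq> A"
  have semi: "semigate4 V E A B P" using gate unfolding gate4_def by blast
  then have "connected_set E A" "A \<subseteq> V" unfolding semigate4_def by - (elim conjE, assumption)+
  moreover have "symp E" "finite V" using graph unfolding graph_def symp_def by blast+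
  ultimately interpret connected_subgraph E A
    by unfold_locales
  have fin: "finite A" using \<open>finite V\<close> \<open>A \<subseteq> V\<close> by (rule finite_subset[rotated])
  obtain v where v: "v \<in> A - C" and conn: "connected_set E (A - {v})"
    using connected_set_delete_farthest[OF fin CA C neq] .
  have "v \<notin> P i" if i: "i \<in> {1..4}" for i
  proof
    assume "v \<in> P i"
    then have "v \<in> P i \<inter> A" using v by blast
    then have "v = a i" using ends i by blast
    then show False using aC v i by blast
  qed
  then have "semigate4 V E (A - {v}) B P" using semigate4_delete[OF semi _ conn] by blast
  moreover have "strictly_better4 (A - {v}) B P A B P"
    unfolding strictly_better4_def using v by blast
  ultimately show False using gate unfolding gate4_def by blast
qed

definition C4_free :: "('a \<Rightarrow> 'a \<Rightarrow> bool) \<Rightarrow> 'a set \<Rightarrow> bool" where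
  "C4_free E X \<longleftrightarrow> (\<forall>x\<in>X. \<forall>x'\<in>X. \<forall>y'\<in>X. \<forall>y\<in>X.
     distinct [x, x', y', y] \<and> E x x' \<and> E x' y' \<and> E y' y \<and> E y x \<longrightarrow> E x y' \<or> E x' y)"

lemma C4_free_subset: "C4_free E V \<Longrightarrow> X \<subseteq> V \<Longrightarrow> C4_free E X"
  unfolding C4_free_def by blast

lemma all_less_4: "(\<forall>i<Suc (Suc (Suc (Suc 0))). Q i) \<longleftrightarrow> Q 0 \<and> Q 1 \<and> Q 2 \<and> Q 3"
  by (simp only: All_less_Suc not_less0) (auto simp: numeral_eq_Suc)

lemma is_hole_4_cycle:
  assumes graph: "graph V E" and V: "x \<in> V" "x' \<in> V" "y' \<in> V" "y \<in> V"
    and cyc: "distinct [x, x', y', y]" "E x x'" "E x' y'" "E y' y" "E y x"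
    and chordless: "\<not> E x y'" "\<not> E x' y"
  shows "is_hole V E [x, x', y', y]"
proof -
  have sym: "E u w \<Longrightarrow> E w u" and irrefl: "\<not> E u u" for u w
    using graph unfolding graph_def by blast+
  have "E x' x" "E y' x'" "E y y'" "E x y" "\<not> E y' x" "\<not> E y x'"
    using cyc(2-5) chordless sym by blast+
  then show ?thesis
    using V cyc chordless irrefl unfolding is_hole_def by (simp add: all_less_4)
qed

lemma holed_C4_free:
  assumes graph: "graph V E" and holed: "holed l V E" and l: "5 \<le> l"
  shows "C4_free E V"
  unfolding C4_free_def
proof (intro ballI impI)
  fix x x' y' y
  assume V: "x \<in> V" "x' \<in> V" "y' \<in> V" "y \<in> V"
    and cyc: "distinct [x, x', y', y] \<and> E x x' \<and> E x' y' \<and> E y' y \<and> E y x"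
  show "E x y' \<or> E x' y"
  proof (rule ccontr)
    assume "\<not> (E x y' \<or> E x' y)"
    then have "is_hole V E [x, x', y', y]"
      using is_hole_4_cycle[OF graph V] cyc by blast
    then show False using holed l unfolding holed_def by fastforce
  qed
qed

definition two_equal_third_le_succ :: "nat \<Rightarrow> nat \<Rightarrow> nat \<Rightarrow> bool" where
  "two_equal_third_le_succ x y z \<longleftrightarrow>
     (x = y \<and> z \<le> x + 1) \<or> (x = z \<and> y \<le> x + 1) \<or> (y = z \<and> x \<le> y + 1)"

lemma two_equal_third_le_succ_swap12:
  "two_equal_third_le_succ y x z \<Longrightarrow> two_equal_third_le_succ x y z"
  unfolding two_equal_third_le_succ_def by auto

lemma two_equal_third_le_succ_swap23:
  "two_equal_third_le_succ x z y \<Longrightarrow> two_equal_third_le_succ x y z"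
  unfolding two_equal_third_le_succ_def by auto

lemma Min_image_witness:
  fixes f :: "'a \<Rightarrow> 'b::linorder"
  assumes "finite F" "F \<noteq> {}"
  obtains p where "p \<in> F" "Min (f ` F) = f p" "\<And>q. q \<in> F \<Longrightarrow> f p \<le> f q"
proof -
  have "Min (f ` F) \<in> f ` F" using assms by simp
  then obtain p where "p \<in> F" "Min (f ` F) = f p" by blast
  moreover have "\<And>q. q \<in> F \<Longrightarrow> Min (f ` F) \<le> f q" using assms(1) by simp
  ultimately show ?thesis using that by metis
qed

text \<open>F is a set of rungs (i, j) of a ladder. It is square closed if whenever rungs (i, j) and
  (i + 1, j') with |j - j'| = 1 span a square, one of its diagonals (i, j'), (i + 1, j) is a rung.\<close>
definition square_closed :: "(nat \<times> nat) set \<Rightarrow> bool" where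
  "square_closed F \<longleftrightarrow> (\<forall>i j j'. (i, j) \<in> F \<longrightarrow> (Suc i, j') \<in> F \<longrightarrow> j' = Suc j \<or> j = Suc j'
     \<longrightarrow> (i, j') \<in> F \<or> (Suc i, j) \<in> F)"

lemma square_closed_constant_sum:
  assumes "square_closed F" and sum: "\<And>a b. (a, b) \<in> F \<Longrightarrow> a + b = s"
    and ij: "(i, j) \<in> F" and ij': "(i', j') \<in> F"
  shows "int i' - int j' \<noteq> int i - int j + 2"
proof
  assume "int i' - int j' = int i - int j + 2"
  moreover have "i' + j' = i + j" using sum ij ij' by simp
  ultimately have i': "i' = Suc i" and j: "j = Suc j'" by linarith+
  then have "(i, j') \<in> F \<or> (Suc i, j) \<in> F"
    using assms(1) ij ij' unfolding square_closed_def by blast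
  then show False
    using sum[of i j'] sum[of "Suc i" j] sum[OF ij] j by (elim disjE) simp_all
qed

lemma square_closed_constant_diff:
  assumes "square_closed F" and diff: "\<And>a b. (a, b) \<in> F \<Longrightarrow> int a - int b = d"
    and ij: "(i, j) \<in> F" and ij': "(i', j') \<in> F"
  shows "i' + j' \<noteq> i + j + 2"
proof
  assume "i' + j' = i + j + 2"
  moreover have "int i' - int j' = int i - int j" using diff ij ij' by simp
  ultimately have i': "i' = Suc i" and j': "j' = Suc j" by linarith+
  then have "(i, j') \<in> F \<or> (Suc i, j) \<in> F"
    using assms(1) ij ij' unfolding square_closed_def by blast
  then show False
    using diff[of i j'] diff[of "Suc i" j] diff[OF ij] j' by (elim disjE) simp_all
qed

text \<open>The rungs (i, j) of a ladder join position i of one rail of length m to position j of the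
  other rail of length n; the four minima are the lengths of the shortest routes between the rail
  ends. Both S and T equal m + n + 2 minus the spread of the rung values i + j, resp. i - j, and
  square closedness forbids exactly one of the two spreads to vanish.\<close>
lemma ladder_pairings:
  fixes F :: "(nat \<times> nat) set" and m n S T :: nat
  assumes fin: "finite F" and ne: "F \<noteq> {}"
    and bounded: "\<And>i j. (i, j) \<in> F \<Longrightarrow> i \<le> m \<and> j \<le> n"
    and square: "square_closed F"
    and S: "S = Min ((\<lambda>(i, j). i + j + 1) ` F) + Min ((\<lambda>(i, j). (m - i) + (n - j) + 1) ` F)"
    and T: "T = Min ((\<lambda>(i, j). i + (n - j) + 1) ` F) + Min ((\<lambda>(i, j). (m - i) + j + 1) ` F)"
    and S_ge: "m + n \<le> S" and T_ge: "m + n \<le> T"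
  shows "two_equal_third_le_succ (m + n) S T"
proof -
  obtain i1 j1 where r1: "(i1, j1) \<in> F" "Min ((\<lambda>(i, j). i + j + 1) ` F) = i1 + j1 + 1"
    and min1: "\<And>i j. (i, j) \<in> F \<Longrightarrow> i1 + j1 \<le> i + j"
    by (rule Min_image_witness[OF fin ne, of "\<lambda>(i, j). i + j + 1"]) fastforce
  obtain i2 j2 where r2: "(i2, j2) \<in> F" "Min ((\<lambda>(i, j). (m - i) + (n - j) + 1) ` F) = (m - i2) + (n - j2) + 1"
    and max2: "\<And>i j. (i, j) \<in> F \<Longrightarrow> (m - i2) + (n - j2) \<le> (m - i) + (n - j)"
    by (rule Min_image_witness[OF fin ne, of "\<lambda>(i, j). (m - i) + (n - j) + 1"]) fastforce
  obtain i3 j3 where r3: "(i3, j3) \<in> F" "Min ((\<lambda>(i, j). i + (n - j) + 1) ` F) = i3 + (n - j3) + 1"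
    and min3: "\<And>i j. (i, j) \<in> F \<Longrightarrow> i3 + (n - j3) \<le> i + (n - j)"
    by (rule Min_image_witness[OF fin ne, of "\<lambda>(i, j). i + (n - j) + 1"]) fastforce
  obtain i4 j4 where r4: "(i4, j4) \<in> F" "Min ((\<lambda>(i, j). (m - i) + j + 1) ` F) = (m - i4) + j4 + 1"
    and max4: "\<And>i j. (i, j) \<in> F \<Longrightarrow> (m - i4) + j4 \<le> (m - i) + j"
    by (rule Min_image_witness[OF fin ne, of "\<lambda>(i, j). (m - i) + j + 1"]) fastforce
  note b = bounded[OF r1(1)] bounded[OF r2(1)] bounded[OF r3(1)] bounded[OF r4(1)]
  have sums: "i1 + j1 \<le> i + j" "i + j \<le> i2 + j2" if "(i, j) \<in> F" for i j
    using min1[OF that] max2[OF that] bounded[OF that] b by linarith+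
  have diffs: "int i3 - int j3 \<le> int i - int j" "int i - int j \<le> int i4 - int j4" if "(i, j) \<in> F" for i j
    using min3[OF that] max4[OF that] bounded[OF that] b by linarith+
  have S_eq: "int S = int (m + n) + 2 - (int (i2 + j2) - int (i1 + j1))"
    using S r1(2) r2(2) b by simp
  have T_eq: "int T = int (m + n) + 2 - ((int i4 - int j4) - (int i3 - int j3))"
    using T r3(2) r4(2) b by simp
  have "int i3 - int j3 = int i4 - int j4" if "i1 + j1 = i2 + j2"
  proof -
    have sum: "a + b = i1 + j1" if "(a, b) \<in> F" for a b using sums[OF that] \<open>i1 + j1 = i2 + j2\<close> by linarith
    have "int i4 - int j4 \<noteq> int i3 - int j3 + 2"
      using square_closed_constant_sum[OF square sum r3(1) r4(1)] .
    moreover have "int i3 + int j3 = int i4 + int j4" using sum[OF r3(1)] sum[OF r4(1)] by simp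
    moreover have "(int i4 - int j4) - (int i3 - int j3) \<le> 2" using T_eq T_ge by linarith
    ultimately show ?thesis using diffs[OF r4(1)] by presburger
  qed
  moreover have "i1 + j1 = i2 + j2" if "int i3 - int j3 = int i4 - int j4"
  proof -
    have diff: "int a - int b = int i3 - int j3" if "(a, b) \<in> F" for a b
      using diffs[OF that] \<open>int i3 - int j3 = int i4 - int j4\<close> by linarith
    have "i2 + j2 \<noteq> i1 + j1 + 2"
      using square_closed_constant_diff[OF square diff r1(1) r2(1)] .
    moreover have "int i1 - int j1 = int i2 - int j2" using diff[OF r1(1)] diff[OF r2(1)] by simp
    moreover have "int (i2 + j2) - int (i1 + j1) \<le> 2" using S_eq S_ge by linarith
    ultimately show ?thesis using sums[OF r2(1)] by presburger
  qed
  moreover have "0 \<le> int (i2 + j2) - int (i1 + j1)" "0 \<le> (int i4 - int j4) - (int i3 - int j3)"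
    using sums[OF r1(1)] diffs[OF r3(1)] by linarith+
  ultimately show ?thesis
    unfolding two_equal_third_le_succ_def using S_eq T_eq S_ge T_ge by linarith
qed

context connected_subgraph
begin

lemma geodesics_meet_pairings:
  assumes Q: "geodesic a1 a2 Q" and R: "geodesic a3 a4 R" and meet: "set Q \<inter> set R \<noteq> {}"
  shows "dA a1 a3 + dA a2 a4 \<le> dA a1 a2 + dA a3 a4"
    and "dA a1 a4 + dA a2 a3 \<le> dA a1 a2 + dA a3 a4"
proof -
  obtain x where xQ: "x \<in> set Q" and xR: "x \<in> set R" using meet by blast
  have A: "a1 \<in> A" "a2 \<in> A" "a3 \<in> A" "a4 \<in> A" "x \<in> A"
    using geodesic_set[OF Q] geodesic_set[OF R] xQ by blast+
  note tri = dist_triangle[OF _ A(5)]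
  have "dA a1 x + dA x a2 = dA a1 a2" "dA a3 x + dA x a4 = dA a3 a4"
    using geodesic_dist_split[OF Q xQ] geodesic_dist_split[OF R xR] .
  then show "dA a1 a3 + dA a2 a4 \<le> dA a1 a2 + dA a3 a4"
    and "dA a1 a4 + dA a2 a3 \<le> dA a1 a2 + dA a3 a4"
    using tri[of a1 a3] tri[of a2 a4] tri[of a1 a4] tri[of a2 a3] A
      dist_commute[of a2 x] dist_commute[of a3 x] by linarith+
qed

text \<open>Take c adjacent to X and z in Y at minimum distance: a geodesic from c to z together with
  X and Y is connected, hence all of A, and any other neighbour of X on it would be closer to Y.\<close>
lemma cut_vertex_between_apart:
  assumes X: "connected_set E X" "X \<subseteq> A" and Y: "connected_set E Y" "Y \<subseteq> A"
    and apart: "\<And>x y. x \<in> X \<Longrightarrow> y \<in> Y \<Longrightarrow> x \<noteq> y \<and> \<not> E x y"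
    and minimal: "\<And>C. C \<subseteq> A \<Longrightarrow> connected_set E C \<Longrightarrow> X \<union> Y \<subseteq> C \<Longrightarrow> C = A"
  obtains c where "c \<in> A" "\<And>x y. x \<in> X \<Longrightarrow> y \<in> A \<Longrightarrow> y \<notin> X \<Longrightarrow> E x y \<Longrightarrow> y = c"
proof -
  define exit where "exit c z \<longleftrightarrow> c \<in> A - X \<and> (\<exists>x\<in>X. E x c) \<and> z \<in> Y" for c z
  obtain x1 y1 where x1: "x1 \<in> X" and y1: "y1 \<in> Y" using X(1) Y(1) unfolding connected_set_def by blast
  have "y1 \<notin> X" using apart x1 y1 by blast
  moreover have "x1 \<in> A" "y1 \<in> A" using x1 y1 X(2) Y(2) by blast+
  ultimately obtain x0 y0 where "x0 \<in> X" "y0 \<in> A" "y0 \<notin> X" "E x0 y0"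
    by (metis dist_leaving x1)
  then have "exit y0 y1" unfolding exit_def using y1 by blast
  then obtain c z where cz: "exit c z" and cz_min: "\<And>c' z'. exit c' z' \<Longrightarrow> dA c z \<le> dA c' z'"
    using ex_has_least_nat[of "\<lambda>(c, z). exit c z" "(y0, y1)" "\<lambda>(c, z). dA c z"] by auto
  have c: "c \<in> A" "c \<notin> X" and z: "z \<in> Y" using cz unfolding exit_def by blast+
  obtain xc where xc: "xc \<in> X" "E xc c" using cz unfolding exit_def by blast
  obtain Z where Z: "geodesic c z Z" using geodesic_exists c z Y(2) by blast
  have "connected_set E (X \<union> set Z)"
    using connected_set_Un[OF symmetric X(1) connected_set_geodesic[OF Z]] xc geodesic_set(3)[OF Z]
    by blast
  then have "connected_set E (X \<union> set Z \<union> Y)"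
    using connected_set_Un[OF symmetric _ Y(1)] z geodesic_set(4)[OF Z] by blast
  moreover have "X \<union> set Z \<union> Y \<subseteq> A" using X(2) Y(2) geodesic_set(2)[OF Z] by blast
  ultimately have cover: "X \<union> set Z \<union> Y = A" using minimal by blast
  have "y = c" if "x \<in> X" "y \<in> A" "y \<notin> X" "E x y" for x y
  proof -
    have "y \<notin> Y" using apart that by blast
    then have yZ: "y \<in> set Z" using cover that by blast
    have "exit y z" unfolding exit_def using that z by blast
    then have "dA c z \<le> dA y z" by (rule cz_min)
    then have "dA c y = 0" using geodesic_dist_split[OF Z yZ] by linarith
    then show "y = c" using geodesic_mem(1)[OF Z yZ] geodesic_nth_ends(1)[OF Z] by simp
  qed
  with c(1) show ?thesis by (rule that)
qed

lemma geodesics_apart_pairings: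
  assumes Q: "geodesic a1 a2 Q" and R: "geodesic a3 a4 R"
    and apart: "\<And>x y. x \<in> set Q \<Longrightarrow> y \<in> set R \<Longrightarrow> x \<noteq> y \<and> \<not> E x y"
    and minimal: "\<And>C. C \<subseteq> A \<Longrightarrow> connected_set E C \<Longrightarrow> set Q \<union> set R \<subseteq> C \<Longrightarrow> C = A"
  shows "dA a1 a3 + dA a2 a4 = dA a1 a4 + dA a2 a3"
proof -
  have QA: "set Q \<subseteq> A" and RA: "set R \<subseteq> A" using geodesic_set Q R by blast+
  obtain c where c: "c \<in> A" and cut: "\<And>x y. x \<in> set Q \<Longrightarrow> y \<in> A \<Longrightarrow> y \<notin> set Q \<Longrightarrow> E x y \<Longrightarrow> y = c"
    using cut_vertex_between_apart[OF connected_set_geodesic[OF Q] QA connected_set_geodesic[OF R] RA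
        apart minimal] by blast
  have via_c: "dA u v = dA u c + dA c v" if u: "u \<in> set Q" and v: "v \<in> set R" for u v
  proof (rule dist_through_cut_vertex[OF cut c u])
    show "u \<in> A" "v \<in> A" using u v QA RA by blast+
    show "v \<notin> set Q" using u v apart by blast
  qed
  have "a1 \<in> set Q" "a2 \<in> set Q" "a3 \<in> set R" "a4 \<in> set R" using geodesic_set Q R by blast+
  then show ?thesis by (simp add: via_c)
qed

lemma dist_across_rungs:
  assumes Q: "geodesic a1 a2 Q" and R: "geodesic a3 a4 R"
    and cover: "A = set Q \<union> set R" and disjoint: "set Q \<inter> set R = {}"
    and u: "u \<in> set Q" and w: "w \<in> set R"
  shows "dA u w = Min ((\<lambda>(i, j). dA u (Q ! i) + 1 + dA (R ! j) w) `
                    {(i, j). i \<le> dA a1 a2 \<and> j \<le> dA a3 a4 \<and> E (Q ! i) (R ! j)})"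
proof -
  let ?F = "{(i, j). i \<le> dA a1 a2 \<and> j \<le> dA a3 a4 \<and> E (Q ! i) (R ! j)}"
  let ?f = "\<lambda>(i, j). dA u (Q ! i) + 1 + dA (R ! j) w"
  have uA: "u \<in> A" and wA: "w \<in> A" using u w cover by blast+
  have "finite ?F" by (rule finite_subset[of _ "{..dA a1 a2} \<times> {..dA a3 a4}"]) auto
  have lower: "dA u w \<le> ?f p" if pF: "p \<in> ?F" for p
  proof -
    obtain i j where p: "p = (i, j)" "i \<le> dA a1 a2" "j \<le> dA a3 a4" "E (Q ! i) (R ! j)"
      using pF by blast
    have x: "Q ! i \<in> A" and y: "R ! j \<in> A"
      using geodesic_set(1,2)[OF Q] geodesic_set(1,2)[OF R] p by blast+
    have "dA u w \<le> dA u (Q ! i) + dA (Q ! i) w" using dist_triangle[OF uA x wA] .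
    also have "dA (Q ! i) w \<le> dA (Q ! i) (R ! j) + dA (R ! j) w" using dist_triangle[OF x y wA] .
    also have "dA (Q ! i) (R ! j) \<le> 1" using dist_edge[OF p(4) x y] .
    finally show ?thesis using p(1) by simp
  qed
  have attained: "dA u w \<in> ?f ` ?F"
  proof -
    have "w \<notin> set Q" using w disjoint by blast
    then obtain x y where xy: "x \<in> set Q" "y \<in> A" "y \<notin> set Q" "E x y"
      and split: "dA u w = dA u x + 1 + dA y w"
      using dist_leaving[OF u uA wA] by blast
    have y: "y \<in> set R" using xy cover by blast
    have "?f (dA a1 x, dA a3 y) = dA u w" "(dA a1 x, dA a3 y) \<in> ?F"
      using geodesic_mem[OF Q xy(1)] geodesic_mem[OF R y] xy(4) split by simp_all
    then show ?thesis by (rule image_eqI[OF HOL.sym])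
  qed
  show ?thesis
  proof (rule HOL.sym, rule Min_eqI)
    show "finite (?f ` ?F)" using \<open>finite ?F\<close> by blast
    show "dA u w \<le> y" if "y \<in> ?f ` ?F" for y using lower that by blast
  qed (rule attained)
qed

lemma geodesics_square_diagonal:
  assumes Q: "geodesic a1 a2 Q" and R: "geodesic a3 a4 R"
    and disjoint: "set Q \<inter> set R = {}" and C4: "C4_free E A"
    and i: "i < dA a1 a2" and j: "j \<le> dA a3 a4" "j' \<le> dA a3 a4" "j' = Suc j \<or> j = Suc j'"
    and rungs: "E (Q ! i) (R ! j)" "E (Q ! Suc i) (R ! j')"
  shows "E (Q ! i) (R ! j') \<or> E (Q ! Suc i) (R ! j)"
proof -
  have "E (Q ! i) (Q ! Suc i)" using geodesic_adjacent[OF Q i] .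
  moreover have "E (R ! j') (R ! j)"
    using j(3)
  proof
    assume "j' = Suc j"
    then have "E (R ! j) (R ! j')" using geodesic_adjacent[OF R] j by simp
    with symmetric show ?thesis by (rule sympD)
  next
    assume "j = Suc j'"
    then show ?thesis using geodesic_adjacent[OF R] j by simp
  qed
  moreover have "E (R ! j) (Q ! i)" using symmetric rungs(1) by (rule sympD)
  moreover have "distinct [Q ! i, Q ! Suc i, R ! j', R ! j]"
  proof -
    have "Q ! i \<noteq> Q ! Suc i" using geodesic_nth_inj[OF Q, of i "Suc i"] i by auto
    moreover have "R ! j' \<noteq> R ! j" using geodesic_nth_inj[OF R, of j' j] j by auto
    moreover have "Q ! k \<noteq> R ! l" if "k \<le> dA a1 a2" "l \<le> dA a3 a4" for k l
      using geodesic_set(1)[OF Q] geodesic_set(1)[OF R] that disjoint by blast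
    ultimately show ?thesis using i j by auto
  qed
  moreover have "Q ! i \<in> A" "Q ! Suc i \<in> A" "R ! j \<in> A" "R ! j' \<in> A"
    using geodesic_set(1,2)[OF Q] geodesic_set(1,2)[OF R] i j by (blast intro: less_imp_le Suc_leI)+
  ultimately show ?thesis using C4 rungs(2) unfolding C4_free_def by blast
qed

lemma geodesics_ladder_pairings:
  assumes Q: "geodesic a1 a2 Q" and R: "geodesic a3 a4 R"
    and cover: "A = set Q \<union> set R" and disjoint: "set Q \<inter> set R = {}"
    and rung: "\<exists>x\<in>set Q. \<exists>y\<in>set R. E x y" and C4: "C4_free E A"
    and le13: "dA a1 a2 + dA a3 a4 \<le> dA a1 a3 + dA a2 a4"
    and le14: "dA a1 a2 + dA a3 a4 \<le> dA a1 a4 + dA a2 a3"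
  shows "two_equal_third_le_succ (dA a1 a2 + dA a3 a4) (dA a1 a3 + dA a2 a4) (dA a1 a4 + dA a2 a3)"
proof -
  define m n where "m = dA a1 a2" and "n = dA a3 a4"
  define F where "F = {(i, j). i \<le> m \<and> j \<le> n \<and> E (Q ! i) (R ! j)}"
  have ends: "a1 \<in> set Q" "a2 \<in> set Q" "a3 \<in> set R" "a4 \<in> set R"
    using geodesic_set Q R by blast+
  note Qd = geodesic_nth_dist_ends[OF Q, folded m_def] and Rd = geodesic_nth_dist_ends[OF R, folded n_def]
  have across: "dA u w = Min ((\<lambda>(i, j). dA u (Q ! i) + 1 + dA (R ! j) w) ` F)"
    if "u \<in> set Q" "w \<in> set R" for u w
    using dist_across_rungs[OF Q R cover disjoint that] unfolding F_def m_def n_def .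
  have S: "dA a1 a3 + dA a2 a4
      = Min ((\<lambda>(i, j). i + j + 1) ` F) + Min ((\<lambda>(i, j). (m - i) + (n - j) + 1) ` F)"
    and T: "dA a1 a4 + dA a2 a3
      = Min ((\<lambda>(i, j). i + (n - j) + 1) ` F) + Min ((\<lambda>(i, j). (m - i) + j + 1) ` F)"
    using across[OF ends(1,3)] across[OF ends(2,4)] across[OF ends(1,4)] across[OF ends(2,3)]
    by (auto intro!: arg_cong2[where f = "(+)"] arg_cong[where f = Min] image_cong
        simp: F_def Qd Rd dist_commute[of _ a3] dist_commute[of _ a4])
  have fin: "finite F" by (rule finite_subset[of _ "{..m} \<times> {..n}"]) (auto simp: F_def)
  have ne: "F \<noteq> {}"
  proof -
    obtain x y where "x \<in> set Q" "y \<in> set R" "E x y" using rung by blast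
    then have "(dA a1 x, dA a3 y) \<in> F"
      unfolding F_def m_def n_def using geodesic_mem[OF Q] geodesic_mem[OF R] by simp
    then show ?thesis by blast
  qed
  have bounded: "\<And>i j. (i, j) \<in> F \<Longrightarrow> i \<le> m \<and> j \<le> n" unfolding F_def by blast
  have square: "square_closed F"
    unfolding square_closed_def F_def m_def n_def
    using geodesics_square_diagonal[OF Q R disjoint C4] by (auto simp: Suc_le_eq)
  have "m + n \<le> dA a1 a3 + dA a2 a4" "m + n \<le> dA a1 a4 + dA a2 a3"
    using le13 le14 unfolding m_def n_def .
  with fin ne bounded square S T
  have "two_equal_third_le_succ (m + n) (dA a1 a3 + dA a2 a4) (dA a1 a4 + dA a2 a3)"
    by (rule ladder_pairings)
  then show ?thesis unfolding m_def n_def .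
qed

lemma four_point_pairings_min:
  assumes C4: "C4_free E A"
    and minimal: "\<And>C. C \<subseteq> A \<Longrightarrow> connected_set E C \<Longrightarrow> {a1, a2, a3, a4} \<subseteq> C \<Longrightarrow> C = A"
    and A: "a1 \<in> A" "a2 \<in> A" "a3 \<in> A" "a4 \<in> A"
    and le13: "dA a1 a2 + dA a3 a4 \<le> dA a1 a3 + dA a2 a4"
    and le14: "dA a1 a2 + dA a3 a4 \<le> dA a1 a4 + dA a2 a3"
  shows "two_equal_third_le_succ (dA a1 a2 + dA a3 a4) (dA a1 a3 + dA a2 a4) (dA a1 a4 + dA a2 a3)"
proof -
  obtain Q R where Q: "geodesic a1 a2 Q" and R: "geodesic a3 a4 R"
    using geodesic_exists A by metis
  have minimal': "C = A" if "C \<subseteq> A" "connected_set E C" "set Q \<union> set R \<subseteq> C" for C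
    using minimal[OF that(1,2)] that(3) geodesic_set(3,4)[OF Q] geodesic_set(3,4)[OF R] by blast
  consider (meet) "set Q \<inter> set R \<noteq> {}"
    | (apart) "\<forall>x\<in>set Q. \<forall>y\<in>set R. x \<noteq> y \<and> \<not> E x y"
    | (rung) "set Q \<inter> set R = {}" "\<exists>x\<in>set Q. \<exists>y\<in>set R. E x y"
    by blast
  then show ?thesis
  proof cases
    case meet
    with geodesics_meet_pairings[OF Q R] le13 le14
    have "dA a1 a2 + dA a3 a4 = dA a1 a3 + dA a2 a4" "dA a1 a4 + dA a2 a3 \<le> dA a1 a2 + dA a3 a4 + 1"
      by linarith+
    then show ?thesis unfolding two_equal_third_le_succ_def by blast
  next
    case apart
    then have "dA a1 a3 + dA a2 a4 = dA a1 a4 + dA a2 a3"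
      using geodesics_apart_pairings[OF Q R _ minimal'] by blast
    then show ?thesis using le13 unfolding two_equal_third_le_succ_def by linarith
  next
    case rung
    have "connected_set E (set Q \<union> set R)"
      using connected_set_Un[OF symmetric connected_set_geodesic[OF Q] connected_set_geodesic[OF R]]
        rung(2) by blast
    moreover have "set Q \<union> set R \<subseteq> A" using geodesic_set(2)[OF Q] geodesic_set(2)[OF R] by blast
    ultimately have "A = set Q \<union> set R" using minimal' by blast
    from geodesics_ladder_pairings[OF Q R this rung C4 le13 le14] show ?thesis .
  qed
qed

lemma four_point_pairings:
  assumes C4: "C4_free E A"
    and minimal: "\<And>C. C \<subseteq> A \<Longrightarrow> connected_set E C \<Longrightarrow> {a1, a2, a3, a4} \<subseteq> C \<Longrightarrow> C = A"
    and A: "a1 \<in> A" "a2 \<in> A" "a3 \<in> A" "a4 \<in> A"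
  shows "two_equal_third_le_succ (dA a1 a2 + dA a3 a4) (dA a1 a3 + dA a2 a4) (dA a1 a4 + dA a2 a3)"
proof -
  have minimal_1324: "C = A" if "C \<subseteq> A" "connected_set E C" "{a1, a3, a2, a4} \<subseteq> C" for C
    using minimal[OF that(1,2)] that(3) by blast
  have minimal_1423: "C = A" if "C \<subseteq> A" "connected_set E C" "{a1, a4, a2, a3} \<subseteq> C" for C
    using minimal[OF that(1,2)] that(3) by blast
  consider "dA a1 a2 + dA a3 a4 \<le> dA a1 a3 + dA a2 a4" "dA a1 a2 + dA a3 a4 \<le> dA a1 a4 + dA a2 a3"
    | "dA a1 a3 + dA a2 a4 \<le> dA a1 a2 + dA a3 a4" "dA a1 a3 + dA a2 a4 \<le> dA a1 a4 + dA a3 a2"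
    | "dA a1 a4 + dA a2 a3 \<le> dA a1 a2 + dA a4 a3" "dA a1 a4 + dA a2 a3 \<le> dA a1 a3 + dA a4 a2"
    using dist_commute[of a3 a2] dist_commute[of a4 a3] dist_commute[of a4 a2] by linarith
  then show ?thesis
  proof cases
    case 1
    from four_point_pairings_min[OF C4 minimal A 1] show ?thesis .
  next
    case 2
    have "two_equal_third_le_succ (dA a1 a3 + dA a2 a4) (dA a1 a2 + dA a3 a4) (dA a1 a4 + dA a2 a3)"
      using four_point_pairings_min[OF C4 minimal_1324 A(1,3,2,4) 2]
      by (simp only: dist_commute[of a3 a2])
    then show ?thesis by (rule two_equal_third_le_succ_swap12)
  next
    case 3
    have "two_equal_third_le_succ (dA a1 a4 + dA a2 a3) (dA a1 a2 + dA a3 a4) (dA a1 a3 + dA a2 a4)"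
      using four_point_pairings_min[OF C4 minimal_1423 A(1,4,2,3) 3]
      by (simp only: dist_commute[of a4 a3] dist_commute[of a4 a2])
    then show ?thesis by (rule two_equal_third_le_succ_swap23[OF two_equal_third_le_succ_swap12])
  qed
qed

end

theorem mainTheorem7:
  fixes V :: "'a set" and E :: "'a \<Rightarrow> 'a \<Rightarrow> bool" and l :: nat
    and A B :: "'a set" and P :: "nat \<Rightarrow> 'a set" and a :: "nat \<Rightarrow> 'a"
  assumes "l \<ge> 5"
    and "graph V E"
    and "holed l V E"
    and "gate4 V E A B P"
    and "\<forall>i\<in>{1..4}. P i \<inter> A = {a i}"
  shows "let d1234 = dist_in E A (a 1) (a 2) + dist_in E A (a 3) (a 4);
             d1324 = dist_in E A (a 1) (a 3) + dist_in E A (a 2) (a 4);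
             d1423 = dist_in E A (a 1) (a 4) + dist_in E A (a 2) (a 3)
         in (d1234 = d1324 \<and> d1423 \<le> d1234 + 1) \<or>
            (d1234 = d1423 \<and> d1324 \<le> d1234 + 1) \<or>
            (d1324 = d1423 \<and> d1234 \<le> d1324 + 1)"
proof -
  note l = assms(1) and graph = assms(2) and holed = assms(3) and gate = assms(4)
    and ends = assms(5)
  have "semigate4 V E A B P" using gate unfolding gate4_def by blast
  then have AV: "A \<subseteq> V" and "connected_set E A"
    unfolding semigate4_def by - (elim conjE, assumption)+
  moreover have "symp E" using graph unfolding graph_def symp_def by blast
  ultimately interpret connected_subgraph E A by unfold_locales
  have C4: "C4_free E A" using C4_free_subset[OF holed_C4_free[OF graph holed l] AV] .
  have four: "{1..4} = {1, 2, 3, 4 :: nat}" by auto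
  have aA: "a 1 \<in> A" "a 2 \<in> A" "a 3 \<in> A" "a 4 \<in> A" using ends unfolding four by blast+
  have "C = A" if "C \<subseteq> A" "connected_set E C" "{a 1, a 2, a 3, a 4} \<subseteq> C" for C
    using gate4_connected_subset_eq[OF graph gate ends that(1,2)] that(3) unfolding four by blast
  from four_point_pairings[OF C4 this aA] show ?thesis
    unfolding two_equal_third_le_succ_def Let_def .
qed

end
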